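(* There is an absolute constant $C$ such that for all real $x\ge2$ and $y\ge3$, $$\pi(x+y)-\pi(x)\le\frac{2y}{\log y}+C\,\frac{y\log\log y}{(\log y)^2}.$$
   Context: $\pi(t)$ denotes the number of primes $\le t$. *)

theory Defs
  imports "HOL-Analysis.Analysis" "HOL-Computational_Algebra.Primes"
begin

definition primepi :: "real \<Rightarrow> nat" where
  "primepi t = card {p :: nat. prime p \<and> real p \<le> t}"

end

theory Submission
  imports Defs "HOL-Real_Asymp.Real_Asymp"
begin

text \<open>Selberg's upper bound sieve with level \<open>z\<close> gives, for every interval of length \<open>y\<close>,
  \<open>\<pi>(x + y) - \<pi>(x) \<le> z + y / G(z) + z\<^sup>2\<close>, where \<open>G(z) = \<Sum>\<^bsub>d \<le> z\<^esub> \<mu>(d)\<^sup>2 / \<phi>(d)\<close>.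
  Expanding \<open>1 / \<phi>(d)\<close> as the sum of \<open>1 / n\<close> over the \<open>n\<close> with radical \<open>d\<close> shows
  \<open>G(z) \<ge> \<Sum>\<^bsub>n \<le> z\<^esub> 1 / n \<ge> log z\<close>. With \<open>z = \<surd>y / log y\<close> one has
  \<open>y / log z = 2 y / log y + O(y log log y / (log y)\<^sup>2)\<close> while \<open>z + z\<^sup>2 = O(y / (log y)\<^sup>2)\<close>;
  for bounded \<open>y\<close> the trivial bound \<open>y + 1\<close> suffices.\<close>

declare of_nat_prod [simp del]

section \<open>Primes and multiples in an interval\<close>

lemma prime_real_gt_1: "prime p \<Longrightarrow> real p > 1"
  using prime_gt_1_nat by simp

lemma finite_primes_upto: "finite {p::nat. prime p \<and> real p \<le> z}"
  by (rule finite_subset[of _ "{..nat \<lfloor>z\<rfloor>}"]) (auto simp: le_nat_floor)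

lemma primepi_le:
  assumes "0 \<le> z"
  shows "real (primepi z) \<le> z"
proof -
  have "primepi z \<le> card {1..nat \<lfloor>z\<rfloor>}"
    unfolding primepi_def by (intro card_mono) (auto simp: le_nat_floor Suc_le_eq prime_gt_0_nat)
  with assms show ?thesis by simp linarith
qed

lemma finite_nat_interval: "finite {n::nat. a < real n \<and> real n \<le> b}"
  by (rule finite_subset[of _ "{..nat \<lfloor>b\<rfloor>}"]) (auto simp: le_nat_floor)

lemma primepi_diff_eq_card:
  assumes "0 \<le> y"
  shows "real (primepi (x + y)) - real (primepi x)
    = real (card {p. prime p \<and> x < real p \<and> real p \<le> x + y})"
proof -
  have split: "{p. prime p \<and> real p \<le> x + y}
      = {p. prime p \<and> real p \<le> x} \<union> {p. prime p \<and> x < real p \<and> real p \<le> x + y}"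
    using assms by auto
  have "finite {p. prime p \<and> x < real p \<and> real p \<le> x + y}"
    by (rule finite_subset[OF _ finite_nat_interval]) auto
  then have "card ({p. prime p \<and> real p \<le> x} \<union> {p. prime p \<and> x < real p \<and> real p \<le> x + y})
      = card {p. prime p \<and> real p \<le> x} + card {p. prime p \<and> x < real p \<and> real p \<le> x + y}"
    by (intro card_Un_disjoint finite_primes_upto) auto
  then show ?thesis
    by (simp add: primepi_def split)
qed

lemma card_nat_interval:
  assumes "0 \<le> a" "a \<le> b"
  shows "real (card {k::nat. a < real k \<and> real k \<le> b}) = real_of_int (\<lfloor>b\<rfloor> - \<lfloor>a\<rfloor>)"
proof -
  have "{k::nat. a < real k \<and> real k \<le> b} = {nat \<lfloor>a\<rfloor><..nat \<lfloor>b\<rfloor>}"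
    using assms by (auto simp: nat_less_iff le_nat_iff floor_less_iff le_floor_iff)
  moreover have "0 \<le> \<lfloor>a\<rfloor>" "\<lfloor>a\<rfloor> \<le> \<lfloor>b\<rfloor>" "0 \<le> \<lfloor>b\<rfloor>"
    using assms by (auto intro: floor_mono)
  ultimately show ?thesis by (simp add: of_nat_diff)
qed

lemma card_multiples_in_interval:
  assumes "0 \<le> a" "a \<le> b" "m > 0"
  shows "\<bar>real (card {n::nat. a < real n \<and> real n \<le> b \<and> m dvd n}) - (b - a) / real m\<bar> \<le> 1"
proof -
  have "{n::nat. a < real n \<and> real n \<le> b \<and> m dvd n} = (\<lambda>k. m * k) ` {k. a / m < real k \<and> real k \<le> b / m}"
    using assms by (auto simp: field_simps elim!: dvdE)
  moreover have "inj (\<lambda>k. m * k)"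
    using assms by (auto intro: injI)
  ultimately have "real (card {n::nat. a < real n \<and> real n \<le> b \<and> m dvd n})
      = real_of_int (\<lfloor>b / m\<rfloor> - \<lfloor>a / m\<rfloor>)"
    using assms by (simp add: card_image inj_on_subset card_nat_interval divide_right_mono)
  moreover have "(b - a) / real m = b / m - a / m"
    by (simp add: diff_divide_distrib)
  ultimately show ?thesis
    by linarith
qed

lemma card_primes_in_interval_le_trivial:
  assumes "0 \<le> x" "0 \<le> y"
  shows "real (card {p. prime p \<and> x < real p \<and> real p \<le> x + y}) \<le> y + 1"
proof -
  have "card {p. prime p \<and> x < real p \<and> real p \<le> x + y} \<le> card {n::nat. x < real n \<and> real n \<le> x + y}"
    by (intro card_mono finite_nat_interval) auto
  moreover have "real (card {n::nat. x < real n \<and> real n \<le> x + y}) \<le> y + 1"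
    using assms card_nat_interval[of x "x + y"] by linarith
  ultimately show ?thesis by linarith
qed

section \<open>Squarefree numbers as sets of primes\<close>

lemma prod_primes_pos: "(\<And>p. p \<in> S \<Longrightarrow> prime p) \<Longrightarrow> \<Prod>S > (0::nat)"
  by (rule prod_pos) (auto intro: prime_gt_0_nat)

lemma prod_primes_dvd_iff:
  assumes "finite S" "\<And>p. p \<in> S \<Longrightarrow> prime p"
  shows "\<Prod>S dvd n \<longleftrightarrow> (\<forall>p\<in>S. p dvd (n::nat))"
  using assms
proof (induction S rule: finite_induct)
  case (insert q S)
  have "coprime q (\<Prod>S)"
    using insert by (intro prod_coprime_right primes_coprime) auto
  with insert show ?case
    by (auto simp: divides_mult dest: dvd_mult_left dvd_mult_right)
qed simp

lemma prime_dvd_prod_primes_iff: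
  assumes "finite S" "\<And>p. p \<in> S \<Longrightarrow> prime p" "prime q"
  shows "q dvd \<Prod>S \<longleftrightarrow> q \<in> (S::nat set)"
proof
  assume "q dvd \<Prod>S"
  then obtain p where "p \<in> S" "q dvd p"
    using prime_dvd_prod_iff[of S q id] assms by auto
  then show "q \<in> S"
    using assms primes_dvd_imp_eq by metis
next
  assume "q \<in> S"
  then show "q dvd \<Prod>S"
    using dvd_prodI[OF assms(1), of q id] by simp
qed

text \<open>A finite set \<open>S\<close> of primes stands for the squarefree number \<open>\<Prod>S\<close>, so \<open>prime_sets_upto z\<close>
  indexes the squarefree \<open>d \<le> z\<close>, the moduli of the sieve.\<close>

definition prime_sets_upto :: "real \<Rightarrow> nat set set" where
  "prime_sets_upto z = {S. S \<subseteq> {p. prime p \<and> real p \<le> z} \<and> real (\<Prod>S) \<le> z}"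

lemma prime_sets_upto_finite: "S \<in> prime_sets_upto z \<Longrightarrow> finite S"
  using finite_primes_upto by (auto simp: prime_sets_upto_def intro: finite_subset)

lemma prime_sets_upto_prime: "S \<in> prime_sets_upto z \<Longrightarrow> p \<in> S \<Longrightarrow> prime p"
  by (auto simp: prime_sets_upto_def)

lemma finite_prime_sets_upto: "finite (prime_sets_upto z)"
  by (rule finite_subset[of _ "Pow {p. prime p \<and> real p \<le> z}"])
    (auto simp: prime_sets_upto_def finite_primes_upto)

lemma empty_in_prime_sets_upto: "z \<ge> 1 \<Longrightarrow> {} \<in> prime_sets_upto z"
  by (simp add: prime_sets_upto_def)

lemma prod_prime_sets_upto_pos: "S \<in> prime_sets_upto z \<Longrightarrow> 0 < \<Prod>S"
  by (rule prod_primes_pos) (rule prime_sets_upto_prime)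

lemma prime_sets_upto_dvd_prod_iff:
  "S \<in> prime_sets_upto z \<Longrightarrow> prime p \<Longrightarrow> p dvd \<Prod>S \<longleftrightarrow> p \<in> S"
  by (rule prime_dvd_prod_primes_iff[OF prime_sets_upto_finite prime_sets_upto_prime])

lemma prime_sets_upto_dvd_union_iff:
  assumes "A \<in> prime_sets_upto z" "B \<in> prime_sets_upto z"
  shows "\<Prod>A dvd n \<and> \<Prod>B dvd n \<longleftrightarrow> \<Prod>(A \<union> B) dvd n"
  using assms prime_sets_upto_finite prime_sets_upto_prime
  by (subst (1 2 3) prod_primes_dvd_iff) blast+

lemma prime_sets_upto_subset_closed:
  assumes T: "T \<in> prime_sets_upto z" and "S \<subseteq> T"
  shows "S \<in> prime_sets_upto z"
proof -
  have "\<Prod>S \<le> \<Prod>T"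
    using assms prime_sets_upto_finite[OF T] prod_primes_pos prime_sets_upto_prime[OF T]
    by (intro dvd_imp_le prod_dvd_prod_subset) (auto intro: prime_gt_0_nat)
  then have "real (\<Prod>S) \<le> real (\<Prod>T)"
    by (simp only: of_nat_le_iff)
  with assms show ?thesis
    unfolding prime_sets_upto_def by auto
qed

lemma inj_on_Prod_prime_sets_upto: "inj_on Prod (prime_sets_upto z)"
proof (rule inj_onI)
  fix S T assume S: "S \<in> prime_sets_upto z" and T: "T \<in> prime_sets_upto z" and "\<Prod>S = \<Prod>T"
  then have "p \<in> S \<longleftrightarrow> p \<in> T" for p
    by (metis prime_sets_upto_dvd_prod_iff prime_sets_upto_prime)
  then show "S = T" by blast
qed

lemma card_prime_sets_upto_le:
  assumes "z \<ge> 0"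
  shows "real (card (prime_sets_upto z)) \<le> z"
proof -
  have "\<Prod>S \<in> {1..nat \<lfloor>z\<rfloor>}" if S: "S \<in> prime_sets_upto z" for S
  proof -
    have "0 < \<Prod>S"
      using prime_sets_upto_prime[OF S] by (rule prod_primes_pos)
    moreover have "real (\<Prod>S) \<le> z"
      using S by (simp add: prime_sets_upto_def)
    ultimately show ?thesis
      by (simp add: le_nat_floor)
  qed
  then have "card (Prod ` prime_sets_upto z) \<le> card {1..nat \<lfloor>z\<rfloor>}"
    by (intro card_mono) auto
  then have "card (prime_sets_upto z) \<le> nat \<lfloor>z\<rfloor>"
    by (simp add: card_image[OF inj_on_Prod_prime_sets_upto])
  with assms show ?thesis by linarith
qed

lemma prime_factors_in_prime_sets_upto:
  assumes "0 < n" "real n \<le> z"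
  shows "prime_factors n \<in> prime_sets_upto z"
proof -
  have "\<Prod>(prime_factors n) dvd n"
    by (subst prod_primes_dvd_iff) auto
  then have "real (\<Prod>(prime_factors n)) \<le> z"
    using assms by (meson dvd_imp_le of_nat_le_iff order_trans)
  moreover have "real p \<le> z" if "p \<in> prime_factors n" for p
    using that assms by (meson dvd_imp_le in_prime_factors_imp_dvd of_nat_le_iff order_trans)
  ultimately show ?thesis
    by (auto simp: prime_sets_upto_def)
qed

section \<open>Selberg's weights\<close>

text \<open>For a set \<open>S\<close> of primes, \<open>phi_set S = \<phi>(\<Prod>S)\<close> and \<open>h_set S = 1 / \<phi>(\<Prod>S)\<close>; the latter is
  Selberg's multiplicative function \<open>h\<close> for the sieve density \<open>g(d) = 1/d\<close>.\<close>

definition phi_set :: "nat set \<Rightarrow> real" where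
  "phi_set S = (\<Prod>p\<in>S. real p - 1)"

definition h_set :: "nat set \<Rightarrow> real" where
  "h_set S = (\<Prod>p\<in>S. 1 / (real p - 1))"

lemma h_set_nonneg:
  assumes "\<And>p. p \<in> S \<Longrightarrow> prime p"
  shows "h_set S \<ge> 0"
  unfolding h_set_def
proof (intro prod_nonneg)
  fix p assume "p \<in> S"
  then have "real p > 1" by (intro prime_real_gt_1 assms)
  then show "1 / (real p - 1) \<ge> 0" by simp
qed

lemma h_set_nonneg_prime_sets_upto: "S \<in> prime_sets_upto z \<Longrightarrow> h_set S \<ge> 0"
  by (rule h_set_nonneg) (rule prime_sets_upto_prime)

lemma h_set_mult_phi_set:
  assumes "\<And>p. p \<in> S \<Longrightarrow> prime p"
  shows "h_set S * phi_set S = 1"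
proof -
  have "h_set S * phi_set S = (\<Prod>p\<in>S. 1 / (real p - 1) * (real p - 1))"
    unfolding h_set_def phi_set_def by (rule prod.distrib[symmetric])
  also have "\<dots> = 1"
  proof (intro prod.neutral ballI)
    fix p assume "p \<in> S"
    then have "real p > 1" by (intro prime_real_gt_1 assms)
    then show "1 / (real p - 1) * (real p - 1) = 1" by simp
  qed
  finally show ?thesis .
qed

lemma prod_eq_sum_phi_set: "finite S \<Longrightarrow> real (\<Prod>S) = (\<Sum>T\<in>Pow S. phi_set T)"
  using prod_add[of S "\<lambda>p. real p - 1" "\<lambda>_. 1"] by (simp add: phi_set_def of_nat_prod)

lemma prod_mult_h_set_eq_sum:
  assumes "finite S" "\<And>p. p \<in> S \<Longrightarrow> prime p"
  shows "real (\<Prod>S) * h_set S = (\<Sum>V\<in>Pow S. h_set V)"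
proof -
  have "real (\<Prod>S) * h_set S = (\<Prod>p\<in>S. real p * (1 / (real p - 1)))"
    unfolding h_set_def of_nat_prod id_apply by (rule prod.distrib[symmetric])
  also have "\<dots> = (\<Prod>p\<in>S. 1 / (real p - 1) + 1)"
  proof (rule prod.cong[OF refl])
    fix p assume "p \<in> S"
    then have "real p > 1" by (intro prime_real_gt_1 assms)
    then show "real p * (1 / (real p - 1)) = 1 / (real p - 1) + 1"
      by (simp add: field_simps)
  qed
  also have "\<dots> = (\<Sum>V\<in>Pow S. h_set V)"
    using prod_add[OF assms(1), of "\<lambda>p. 1 / (real p - 1)" "\<lambda>_. 1"] by (simp add: h_set_def)
  finally show ?thesis .
qed

lemma sum_minus_one_power_card_between:
  assumes "finite R"
  shows "(\<Sum>S | T \<subseteq> S \<and> S \<subseteq> R. (-1::real) ^ card S) = (if R = T then (-1) ^ card T else 0)"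
proof -
  consider "R = T" | "T \<subset> R" | "\<not> T \<subseteq> R" by blast
  then show ?thesis
  proof cases
    case 1
    then have "{S. T \<subseteq> S \<and> S \<subseteq> R} = {T}" by auto
    with 1 show ?thesis by simp
  next
    case 2
    define A where "A = {S. T \<subseteq> S \<and> S \<subseteq> R}"
    have "finite A"
      using assms unfolding A_def by (auto intro: finite_subset[of _ "Pow R"])
    have "{S. S \<in> A \<and> P S} = {S. S \<subseteq> R \<and> T \<subseteq> S \<and> P S}" for P
      by (auto simp: A_def)
    then have "card {S. S \<in> A \<and> even (card S)} = card {S. S \<in> A \<and> odd (card S)}"
      using card_subsupersets_even_odd[OF assms 2] by presburger
    with \<open>finite A\<close> 2 show ?thesis
      by (simp add: sum_alternating_cancels flip: A_def)
  next
    case 3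
    then have "{S. T \<subseteq> S \<and> S \<subseteq> R} = {}" "R \<noteq> T" by blast+
    then show ?thesis by (simp only: sum.empty if_False)
  qed
qed

definition selberg_G :: "real \<Rightarrow> real" where
  "selberg_G z = (\<Sum>S\<in>prime_sets_upto z. h_set S)"

definition selberg_lambda :: "real \<Rightarrow> nat set \<Rightarrow> real" where
  "selberg_lambda z S = (-1) ^ card S * real (\<Prod>S) / selberg_G z *
     (\<Sum>T\<in>{T\<in>prime_sets_upto z. S \<subseteq> T}. h_set T)"

lemma selberg_G_ge_1:
  assumes "z \<ge> 1"
  shows "selberg_G z \<ge> 1"
proof -
  have "h_set {} \<le> selberg_G z"
    unfolding selberg_G_def using empty_in_prime_sets_upto[OF assms]
    by (rule member_le_sum) (auto simp: h_set_nonneg_prime_sets_upto finite_prime_sets_upto)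
  then show ?thesis by (simp add: h_set_def)
qed

lemma selberg_lambda_empty: "z \<ge> 1 \<Longrightarrow> selberg_lambda z {} = 1"
  using selberg_G_ge_1[of z] by (simp add: selberg_lambda_def selberg_G_def)

lemma sum_selberg_lambda_div_prod:
  assumes z: "z \<ge> 1" and T: "T \<in> prime_sets_upto z"
  shows "(\<Sum>S\<in>{S\<in>prime_sets_upto z. T \<subseteq> S}. selberg_lambda z S / real (\<Prod>S))
    = (-1) ^ card T * h_set T / selberg_G z"
proof -
  define D where "D = prime_sets_upto z"
  define G where "G = selberg_G z"
  have "finite D" unfolding D_def by (rule finite_prime_sets_upto)
  have "(\<Sum>S\<in>{S\<in>D. T \<subseteq> S}. selberg_lambda z S / real (\<Prod>S))
      = (\<Sum>S\<in>{S\<in>D. T \<subseteq> S}. \<Sum>R\<in>{R\<in>D. S \<subseteq> R}. (-1) ^ card S * h_set R / G)"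
  proof (rule sum.cong[OF refl])
    fix S assume "S \<in> {S\<in>D. T \<subseteq> S}"
    then have "real (\<Prod>S) > 0"
      unfolding D_def by (auto simp: prod_prime_sets_upto_pos)
    then show "selberg_lambda z S / real (\<Prod>S) = (\<Sum>R\<in>{R\<in>D. S \<subseteq> R}. (-1) ^ card S * h_set R / G)"
      by (simp add: selberg_lambda_def D_def G_def sum_distrib_left sum_divide_distrib)
  qed
  also have "\<dots> = (\<Sum>R\<in>D. \<Sum>S\<in>{S\<in>{S\<in>D. T \<subseteq> S}. S \<subseteq> R}. (-1) ^ card S * h_set R / G)"
    using \<open>finite D\<close> by (intro sum.swap_restrict) auto
  also have "\<dots> = (\<Sum>R\<in>D. h_set R / G * (\<Sum>S | T \<subseteq> S \<and> S \<subseteq> R. (-1) ^ card S))"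
  proof (rule sum.cong[OF refl])
    fix R assume "R \<in> D"
    then have "{S\<in>{S\<in>D. T \<subseteq> S}. S \<subseteq> R} = {S. T \<subseteq> S \<and> S \<subseteq> R}"
      using prime_sets_upto_subset_closed unfolding D_def by blast
    then show "(\<Sum>S\<in>{S\<in>{S\<in>D. T \<subseteq> S}. S \<subseteq> R}. (-1) ^ card S * h_set R / G)
        = h_set R / G * (\<Sum>S | T \<subseteq> S \<and> S \<subseteq> R. (-1) ^ card S)"
      by (simp add: sum_distrib_left mult.commute)
  qed
  also have "\<dots> = (\<Sum>R\<in>D. if R = T then (-1) ^ card T * h_set T / G else 0)"
    using prime_sets_upto_finite unfolding D_def
    by (intro sum.cong[OF refl]) (simp add: sum_minus_one_power_card_between)
  also have "\<dots> = (-1) ^ card T * h_set T / G"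
    using T \<open>finite D\<close> unfolding D_def by (simp add: sum.delta')
  finally show ?thesis unfolding D_def G_def .
qed

lemma real_prod_union_mult_prod_inter:
  assumes "finite A" "finite B"
  shows "real (\<Prod>(A \<union> B)) * real (\<Prod>(A \<inter> B)) = real (\<Prod>A) * real (\<Prod>B)"
  using prod.union_inter[OF assms, of "\<lambda>p. p"] by (simp only: of_nat_mult[symmetric] of_nat_eq_iff)

lemma prod_inter_eq_sum_phi_set:
  assumes "A \<in> prime_sets_upto z"
  shows "real (\<Prod>(A \<inter> B)) = (\<Sum>T\<in>prime_sets_upto z. if T \<subseteq> A \<and> T \<subseteq> B then phi_set T else 0)"
proof -
  have "Pow (A \<inter> B) = {T\<in>prime_sets_upto z. T \<subseteq> A \<and> T \<subseteq> B}"
    using assms prime_sets_upto_subset_closed by blast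
  with assms show ?thesis
    by (simp add: prod_eq_sum_phi_set sum.inter_filter prime_sets_upto_finite finite_prime_sets_upto)
qed

lemma sum_sum_common_subsets:
  fixes c f :: "'a set \<Rightarrow> real"
  shows "(\<Sum>A\<in>D. \<Sum>B\<in>D. \<Sum>T\<in>D. if T \<subseteq> A \<and> T \<subseteq> B then c T * f A * f B else 0)
    = (\<Sum>T\<in>D. c T * (\<Sum>A\<in>D. if T \<subseteq> A then f A else 0)\<^sup>2)"
proof -
  have "(\<Sum>A\<in>D. \<Sum>B\<in>D. \<Sum>T\<in>D. if T \<subseteq> A \<and> T \<subseteq> B then c T * f A * f B else 0)
      = (\<Sum>T\<in>D. \<Sum>A\<in>D. \<Sum>B\<in>D. if T \<subseteq> A \<and> T \<subseteq> B then c T * f A * f B else 0)"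
    by (subst sum.swap) (rule sum.cong[OF refl], rule sum.swap)
  also have "\<dots> = (\<Sum>T\<in>D. c T * (\<Sum>A\<in>D. if T \<subseteq> A then f A else 0)\<^sup>2)"
  proof (rule sum.cong[OF refl])
    fix T
    have "c T * (\<Sum>A\<in>D. if T \<subseteq> A then f A else 0)\<^sup>2
        = c T * (\<Sum>A\<in>D. \<Sum>B\<in>D. (if T \<subseteq> A then f A else 0) * (if T \<subseteq> B then f B else 0))"
      by (simp add: power2_eq_square sum_product)
    also have "\<dots> = (\<Sum>A\<in>D. \<Sum>B\<in>D. if T \<subseteq> A \<and> T \<subseteq> B then c T * f A * f B else 0)"
      unfolding sum_distrib_left by (intro sum.cong[OF refl]) auto
    finally show "(\<Sum>A\<in>D. \<Sum>B\<in>D. if T \<subseteq> A \<and> T \<subseteq> B then c T * f A * f B else 0)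
        = c T * (\<Sum>A\<in>D. if T \<subseteq> A then f A else 0)\<^sup>2" ..
  qed
  finally show ?thesis .
qed

text \<open>The identities \<open>1 / [A, B] = (A, B) / (A B)\<close> and \<open>n = \<Sum>\<^bsub>d | n\<^esub> \<phi>(d)\<close> diagonalise the
  quadratic form; its diagonal coefficients are \<open>\<phi>(T) (h(T) / G(z))\<^sup>2 = h(T) / G(z)\<^sup>2\<close>.\<close>

lemma selberg_quadratic_form:
  assumes z: "z \<ge> 1"
  shows "(\<Sum>A\<in>prime_sets_upto z. \<Sum>B\<in>prime_sets_upto z.
      selberg_lambda z A * selberg_lambda z B / real (\<Prod>(A \<union> B))) = 1 / selberg_G z"
proof -
  define D where "D = prime_sets_upto z"
  define G where "G = selberg_G z"
  define a where "a A = selberg_lambda z A / real (\<Prod>A)" for A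
  have "G > 0" using selberg_G_ge_1[OF z] unfolding G_def by simp
  have expand: "selberg_lambda z A * selberg_lambda z B / real (\<Prod>(A \<union> B))
     = (\<Sum>T\<in>D. if T \<subseteq> A \<and> T \<subseteq> B then phi_set T * a A * a B else 0)"
    if A: "A \<in> D" and B: "B \<in> D" for A B
  proof -
    have pos: "real (\<Prod>A) > 0" "real (\<Prod>B) > 0" "real (\<Prod>(A \<union> B)) > 0"
      using A B prime_sets_upto_prime unfolding D_def by (auto intro!: prod_primes_pos)
    have "finite A" "finite B"
      using A B prime_sets_upto_finite unfolding D_def by blast+
    then have "real (\<Prod>(A \<union> B)) * real (\<Prod>(A \<inter> B)) = real (\<Prod>A) * real (\<Prod>B)"
      by (rule real_prod_union_mult_prod_inter)
    then have "selberg_lambda z A * selberg_lambda z B / real (\<Prod>(A \<union> B)) = a A * a B * real (\<Prod>(A \<inter> B))"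
      using pos unfolding a_def by (simp add: field_simps)
    then show ?thesis
      using prod_inter_eq_sum_phi_set[of A z B] A unfolding D_def
      by (simp add: sum_distrib_left mult_ac if_distrib cong: if_cong)
  qed
  have "(\<Sum>A\<in>D. \<Sum>B\<in>D. selberg_lambda z A * selberg_lambda z B / real (\<Prod>(A \<union> B)))
     = (\<Sum>T\<in>D. phi_set T * (\<Sum>A\<in>D. if T \<subseteq> A then a A else 0)\<^sup>2)"
    using expand by (simp add: sum_sum_common_subsets)
  also have "\<dots> = (\<Sum>T\<in>D. h_set T / G\<^sup>2)"
  proof (rule sum.cong[OF refl])
    fix T assume T: "T \<in> D"
    have "h_set T * phi_set T = 1"
      using T prime_sets_upto_prime unfolding D_def by (intro h_set_mult_phi_set) blast
    moreover have "(\<Sum>A\<in>D. if T \<subseteq> A then a A else 0) = (-1) ^ card T * h_set T / G"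
      using sum_selberg_lambda_div_prod[OF z, of T] T finite_prime_sets_upto[of z]
      unfolding a_def D_def G_def by (simp add: sum.inter_filter)
    ultimately show "phi_set T * (\<Sum>A\<in>D. if T \<subseteq> A then a A else 0)\<^sup>2 = h_set T / G\<^sup>2"
      by (simp add: power2_eq_square field_simps flip: power_mult_distrib)
  qed
  also have "\<dots> = 1 / G"
    using \<open>G > 0\<close> by (simp add: G_def D_def selberg_G_def power2_eq_square flip: sum_divide_distrib)
  finally show ?thesis unfolding D_def G_def .
qed

text \<open>Since \<open>d h(d) = \<Sum>\<^bsub>v | d\<^esub> h(v)\<close>, the left-hand side is a sum of \<open>h(V \<union> (R - S))\<close> over pairs
  \<open>V \<subseteq> S \<subseteq> R\<close>, and these sets are distinct elements of \<open>prime_sets_upto z\<close>.\<close>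

lemma prod_mult_sum_h_set_supersets_le:
  assumes S: "S \<in> prime_sets_upto z"
  shows "real (\<Prod>S) * (\<Sum>R\<in>{R\<in>prime_sets_upto z. S \<subseteq> R}. h_set R) \<le> selberg_G z"
proof -
  define D where "D = prime_sets_upto z"
  define X where "X = {R\<in>D. S \<subseteq> R}"
  define f where "f = (\<lambda>(V, R). V \<union> (R - S))"
  have "finite D" unfolding D_def by (rule finite_prime_sets_upto)
  have "finite S" using S by (rule prime_sets_upto_finite)
  have "\<And>R. R \<in> X \<Longrightarrow> finite R"
    using prime_sets_upto_finite unfolding X_def D_def by blast
  then have h_split: "h_set R = h_set S * h_set (R - S)" if "R \<in> X" for R
    using that prod.subset_diff[of S R] unfolding X_def h_set_def by (auto simp: mult.commute)
  have h_union: "h_set V * h_set (R - S) = h_set (f (V, R))" if "V \<in> Pow S" "R \<in> X" for V R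
  proof -
    have "finite V" "finite (R - S)" "V \<inter> (R - S) = {}"
      using that \<open>finite S\<close> \<open>\<And>R. R \<in> X \<Longrightarrow> finite R\<close> by (auto intro: finite_subset)
    then show ?thesis
      by (simp add: h_set_def f_def prod.union_disjoint)
  qed
  have "inj_on f (Pow S \<times> X)"
  proof (rule inj_onI, clarsimp simp: f_def X_def)
    fix V R V' R' assume "V \<union> (R - S) = V' \<union> (R' - S)" "V \<subseteq> S" "V' \<subseteq> S" "S \<subseteq> R" "S \<subseteq> R'"
    then show "V = V' \<and> R = R'" by blast
  qed
  have "f ` (Pow S \<times> X) \<subseteq> D"
    using prime_sets_upto_subset_closed unfolding f_def X_def D_def by fastforce
  have "real (\<Prod>S) * (\<Sum>R\<in>X. h_set R) = (\<Sum>R\<in>X. real (\<Prod>S) * h_set S * h_set (R - S))"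
    by (simp add: sum_distrib_left h_split mult.assoc)
  also have "\<dots> = (\<Sum>R\<in>X. \<Sum>V\<in>Pow S. h_set (f (V, R)))"
    using S prime_sets_upto_prime
    by (simp add: prod_mult_h_set_eq_sum[OF \<open>finite S\<close>] sum_distrib_right h_union)
  also have "\<dots> = (\<Sum>V\<in>Pow S. \<Sum>R\<in>X. h_set (f (V, R)))"
    by (rule sum.swap)
  also have "\<dots> = (\<Sum>W\<in>f ` (Pow S \<times> X). h_set W)"
    by (simp add: sum.cartesian_product sum.reindex[OF \<open>inj_on f (Pow S \<times> X)\<close>])
  also have "\<dots> \<le> selberg_G z"
    using \<open>f ` (Pow S \<times> X) \<subseteq> D\<close> \<open>finite D\<close> unfolding selberg_G_def D_def
    by (intro sum_mono2) (auto simp: h_set_nonneg_prime_sets_upto)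
  finally show ?thesis unfolding X_def D_def .
qed

lemma abs_selberg_lambda_le_1:
  assumes z: "z \<ge> 1" and S: "S \<in> prime_sets_upto z"
  shows "\<bar>selberg_lambda z S\<bar> \<le> 1"
proof -
  have "(\<Sum>R\<in>{R\<in>prime_sets_upto z. S \<subseteq> R}. h_set R) \<ge> 0"
    by (rule sum_nonneg) (auto simp: h_set_nonneg_prime_sets_upto)
  with prod_mult_sum_h_set_supersets_le[OF S] selberg_G_ge_1[OF z] show ?thesis
    by (simp add: selberg_lambda_def abs_mult)
qed

section \<open>The upper bound sieve\<close>

definition selberg_weight :: "real \<Rightarrow> nat \<Rightarrow> real" where
  "selberg_weight z n = (\<Sum>S\<in>{S\<in>prime_sets_upto z. \<Prod>S dvd n}. selberg_lambda z S)"

lemma selberg_weight_prime: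
  assumes z: "z \<ge> 1" and p: "prime p" "z < real p"
  shows "selberg_weight z p = 1"
proof -
  have "\<not> \<Prod>S dvd p" if S: "S \<in> prime_sets_upto z" "S \<noteq> {}" for S
  proof
    assume "\<Prod>S dvd p"
    obtain q where "q \<in> S" using S by blast
    then have "prime q" "q dvd \<Prod>S"
      using S prime_sets_upto_prime prime_sets_upto_dvd_prod_iff by blast+
    with \<open>\<Prod>S dvd p\<close> p have "q = p"
      using primes_dvd_imp_eq dvd_trans by blast
    moreover have "q \<le> \<Prod>S"
      using \<open>q dvd \<Prod>S\<close> prod_prime_sets_upto_pos[OF S(1)] by (rule dvd_imp_le)
    moreover have "real (\<Prod>S) \<le> z"
      using S by (simp add: prime_sets_upto_def)
    ultimately show False
      using p by linarith
  qed
  then have "{S\<in>prime_sets_upto z. \<Prod>S dvd p} = {{}}"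
    using empty_in_prime_sets_upto[OF z] by auto
  then show ?thesis
    by (simp add: selberg_weight_def selberg_lambda_empty[OF z])
qed

lemma selberg_weight_square:
  "(selberg_weight z n)\<^sup>2 = (\<Sum>A\<in>prime_sets_upto z. \<Sum>B\<in>prime_sets_upto z.
     if \<Prod>(A \<union> B) dvd n then selberg_lambda z A * selberg_lambda z B else 0)"
proof -
  have "(selberg_weight z n)\<^sup>2 = (\<Sum>A\<in>prime_sets_upto z. \<Sum>B\<in>prime_sets_upto z.
      (if \<Prod>A dvd n then selberg_lambda z A else 0) * (if \<Prod>B dvd n then selberg_lambda z B else 0))"
    by (simp add: selberg_weight_def sum.inter_filter finite_prime_sets_upto power2_eq_square sum_product)
  also have "\<dots> = (\<Sum>A\<in>prime_sets_upto z. \<Sum>B\<in>prime_sets_upto z.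
      if \<Prod>(A \<union> B) dvd n then selberg_lambda z A * selberg_lambda z B else 0)"
    by (intro sum.cong[OF refl]) (auto simp flip: prime_sets_upto_dvd_union_iff)
  finally show ?thesis .
qed

lemma selberg_remainder_le:
  assumes x: "0 \<le> x" and y: "0 \<le> y" and z: "1 \<le> z"
    and A: "A \<in> prime_sets_upto z" and B: "B \<in> prime_sets_upto z"
  shows "selberg_lambda z A * selberg_lambda z B *
      real (card {n. x < real n \<and> real n \<le> x + y \<and> \<Prod>(A \<union> B) dvd n})
    \<le> y * (selberg_lambda z A * selberg_lambda z B / real (\<Prod>(A \<union> B))) + 1"
proof -
  define c where "c = real (card {n. x < real n \<and> real n \<le> x + y \<and> \<Prod>(A \<union> B) dvd n})"
  have "\<Prod>(A \<union> B) > 0"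
    using A B prime_sets_upto_prime by (auto intro!: prod_primes_pos)
  then have "\<bar>c - y / real (\<Prod>(A \<union> B))\<bar> \<le> 1"
    using card_multiples_in_interval[of x "x + y"] x y unfolding c_def by simp
  moreover have "\<bar>selberg_lambda z A\<bar> \<le> 1" "\<bar>selberg_lambda z B\<bar> \<le> 1"
    using A B abs_selberg_lambda_le_1[OF z] by blast+
  ultimately have "\<bar>selberg_lambda z A * selberg_lambda z B * (c - y / real (\<Prod>(A \<union> B)))\<bar> \<le> 1 * 1 * 1"
    unfolding abs_mult by (intro mult_mono) auto
  then show ?thesis
    unfolding c_def[symmetric] by (simp add: algebra_simps)
qed

lemma sum_selberg_weight_square_le:
  assumes x: "0 \<le> x" and y: "0 \<le> y" and z: "1 \<le> z"
  shows "(\<Sum>n | x < real n \<and> real n \<le> x + y. (selberg_weight z n)\<^sup>2) \<le> y / selberg_G z + z\<^sup>2"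
proof -
  define D where "D = prime_sets_upto z"
  define c where "c A B = real (card {n. x < real n \<and> real n \<le> x + y \<and> \<Prod>(A \<union> B) dvd n})" for A B
  have "(\<Sum>n | x < real n \<and> real n \<le> x + y. (selberg_weight z n)\<^sup>2)
      = (\<Sum>A\<in>D. \<Sum>B\<in>D. \<Sum>n | x < real n \<and> real n \<le> x + y.
           if \<Prod>(A \<union> B) dvd n then selberg_lambda z A * selberg_lambda z B else 0)"
    unfolding selberg_weight_square D_def
    by (subst sum.swap) (rule sum.cong[OF refl], rule sum.swap)
  also have "\<dots> = (\<Sum>A\<in>D. \<Sum>B\<in>D. selberg_lambda z A * selberg_lambda z B * c A B)"
    unfolding c_def
    by (intro sum.cong[OF refl]) (simp add: sum.inter_filter[symmetric] finite_nat_interval conj_assoc)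
  also have "\<dots> \<le> (\<Sum>A\<in>D. \<Sum>B\<in>D. y * (selberg_lambda z A * selberg_lambda z B / real (\<Prod>(A \<union> B))) + 1)"
    using selberg_remainder_le[OF x y z] unfolding D_def c_def by (intro sum_mono) blast
  also have "\<dots> = y * (\<Sum>A\<in>D. \<Sum>B\<in>D. selberg_lambda z A * selberg_lambda z B / real (\<Prod>(A \<union> B)))
      + (\<Sum>A\<in>D. \<Sum>B\<in>D. 1)"
    by (simp only: sum.distrib sum_distrib_left)
  also have "\<dots> = y / selberg_G z + (real (card D))\<^sup>2"
    using selberg_quadratic_form[OF z] by (simp add: D_def power2_eq_square)
  also have "\<dots> \<le> y / selberg_G z + z\<^sup>2"
    using card_prime_sets_upto_le[of z] z unfolding D_def by (simp add: power_mono)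
  finally show ?thesis .
qed

lemma card_primes_in_interval_le_selberg:
  assumes x: "0 \<le> x" and y: "0 \<le> y" and z: "1 \<le> z"
  shows "real (card {p. prime p \<and> x < real p \<and> real p \<le> x + y}) \<le> z + y / selberg_G z + z\<^sup>2"
proof -
  define P where "P = {p. prime p \<and> x < real p \<and> real p \<le> x + y}"
  define Q where "Q = {p\<in>P. z < real p}"
  have "finite P"
    unfolding P_def by (rule finite_subset[OF _ finite_nat_interval]) auto
  have "P \<subseteq> {p. prime p \<and> real p \<le> z} \<union> Q"
    unfolding P_def Q_def by auto
  then have "card P \<le> card ({p. prime p \<and> real p \<le> z} \<union> Q)"
    using \<open>finite P\<close> finite_primes_upto by (intro card_mono) (auto simp: Q_def)
  also have "\<dots> \<le> card {p. prime p \<and> real p \<le> z} + card Q"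
    by (rule card_Un_le)
  finally have "card P \<le> card {p. prime p \<and> real p \<le> z} + card Q" .
  moreover have "real (card Q) = (\<Sum>p\<in>Q. (selberg_weight z p)\<^sup>2)"
    using selberg_weight_prime[OF z] by (simp add: Q_def P_def)
  moreover have "(\<Sum>p\<in>Q. (selberg_weight z p)\<^sup>2)
      \<le> (\<Sum>n | x < real n \<and> real n \<le> x + y. (selberg_weight z n)\<^sup>2)"
    by (intro sum_mono2 finite_nat_interval) (auto simp: Q_def P_def)
  ultimately show ?thesis
    using primepi_le[of z, unfolded primepi_def] sum_selberg_weight_square_le[OF x y z] z
    unfolding P_def by linarith
qed

section \<open>A lower bound for Selberg's normalising sum\<close>

lemma sum_inverse_powers_le:
  assumes "(1::real) < q"
  shows "(\<Sum>k=1..N. inverse q ^ k) \<le> 1 / (q - 1)"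
proof -
  define r where "r = inverse q"
  have r: "0 < r" "r < 1"
    using assms by (auto simp: r_def inverse_less_1_iff)
  have "(\<Sum>k=1..N. r ^ k) \<le> r / (1 - r)"
  proof (cases "N = 0")
    case False
    then have "(\<Sum>k=1..N. r ^ k) = (r - r ^ Suc N) / (1 - r)"
      using r sum_gp[of r 1 N] by simp
    also have "\<dots> \<le> r / (1 - r)"
      using r by (intro divide_right_mono) auto
    finally show ?thesis .
  qed (use r in simp)
  also have "r / (1 - r) = 1 / (q - 1)"
    using assms by (simp add: r_def field_simps)
  finally show ?thesis by (simp add: r_def)
qed

lemma sum_inverse_with_prime_factors_le:
  assumes S: "finite S" "\<And>p. p \<in> S \<Longrightarrow> prime p"
  shows "(\<Sum>n | n \<in> {1..N} \<and> prime_factors n = S. inverse (real n)) \<le> h_set S"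
proof -
  define E where "E = {n. n \<in> {1..N} \<and> prime_factors n = S}"
  define e where "e n = restrict (\<lambda>p. multiplicity p n) S" for n
  have factor: "real n = (\<Prod>p\<in>S. real p ^ e n p)" if "n \<in> E" for n
  proof -
    have "n > 0" "prime_factors n = S" using that by (auto simp: E_def)
    then have "n = (\<Prod>p\<in>S. p ^ multiplicity p n)"
      using prime_factorization_nat by metis
    then have "real n = real (\<Prod>p\<in>S. p ^ multiplicity p n)"
      by (rule arg_cong)
    then show ?thesis
      by (simp add: e_def of_nat_prod cong: prod.cong)
  qed
  have "inj_on e E"
    by (rule inj_onI) (metis factor of_nat_eq_iff)
  have "e ` E \<subseteq> PiE S (\<lambda>_. {1..N})"
  proof (clarsimp simp: e_def E_def)
    fix n p assume n: "Suc 0 \<le> n" "n \<le> N" and p: "p \<in> prime_factors n"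
    then have "0 < multiplicity p n"
      by (simp add: prime_factors_multiplicity)
    moreover have "multiplicity p n < p ^ multiplicity p n"
      using prime_gt_1_nat[OF in_prime_factors_imp_prime[OF p]] by (intro power_gt_expt) simp
    moreover have "p ^ multiplicity p n \<le> n"
      using n by (intro dvd_imp_le multiplicity_dvd) auto
    ultimately show "Suc 0 \<le> multiplicity p n \<and> multiplicity p n \<le> N"
      using n by linarith
  qed
  have "(\<Sum>n\<in>E. inverse (real n)) = (\<Sum>n\<in>E. \<Prod>p\<in>S. inverse (real p) ^ e n p)"
    by (intro sum.cong[OF refl]) (simp add: factor prod_inversef[symmetric, unfolded comp_def] power_inverse)
  also have "\<dots> = (\<Sum>a\<in>e ` E. \<Prod>p\<in>S. inverse (real p) ^ a p)"
    by (simp add: sum.reindex[OF \<open>inj_on e E\<close>])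
  also have "\<dots> \<le> (\<Sum>a\<in>PiE S (\<lambda>_. {1..N}). \<Prod>p\<in>S. inverse (real p) ^ a p)"
    using \<open>e ` E \<subseteq> _\<close> S by (intro sum_mono2 finite_PiE prod_nonneg) auto
  also have "\<dots> = (\<Prod>p\<in>S. \<Sum>k=1..N. inverse (real p) ^ k)"
    by (rule prod_sum_PiE[symmetric]) (auto simp: S)
  also have "\<dots> \<le> h_set S"
    unfolding h_set_def
  proof (rule prod_mono)
    fix p assume "p \<in> S"
    then have "real p > 1" by (intro prime_real_gt_1 S(2))
    then show "0 \<le> (\<Sum>k=1..N. inverse (real p) ^ k) \<and> (\<Sum>k=1..N. inverse (real p) ^ k) \<le> 1 / (real p - 1)"
      using sum_inverse_powers_le[of "real p" N] by (auto intro!: sum_nonneg)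
  qed
  finally show ?thesis by (simp add: E_def)
qed

lemma ln_le_selberg_G:
  assumes z: "1 \<le> z"
  shows "ln z \<le> selberg_G z"
proof -
  define N where "N = nat \<lfloor>z\<rfloor>"
  have "z \<le> real N + 1"
    using z by (simp add: N_def)
  then have "ln z \<le> ln (real N + 1)"
    using z by simp
  also have "\<dots> \<le> (\<Sum>n=1..N. inverse (real n))"
    using ln_le_harm[of N] by (simp add: harm_def)
  also have "\<dots> = (\<Sum>S\<in>prime_sets_upto z. \<Sum>n | n \<in> {1..N} \<and> prime_factors n = S. inverse (real n))"
    using z by (intro sum.group[symmetric] finite_prime_sets_upto)
      (auto simp: N_def le_nat_iff le_floor_iff intro!: prime_factors_in_prime_sets_upto)
  also have "\<dots> \<le> selberg_G z"
    unfolding selberg_G_def using prime_sets_upto_finite prime_sets_upto_prime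
    by (intro sum_mono sum_inverse_with_prime_factors_le) blast+
  finally show ?thesis .
qed

lemma card_primes_in_interval_le:
  assumes "0 \<le> x" "0 \<le> y" "1 < z"
  shows "real (card {p. prime p \<and> x < real p \<and> real p \<le> x + y}) \<le> z + y / ln z + z\<^sup>2"
proof -
  have "y / selberg_G z \<le> y / ln z"
    using assms ln_le_selberg_G[of z] selberg_G_ge_1[of z] by (intro divide_left_mono) auto
  with card_primes_in_interval_le_selberg[of x y z] assms show ?thesis
    by linarith
qed

section \<open>Choosing the sieve level\<close>

lemma eventually_card_primes_in_interval_le:
  "eventually (\<lambda>y. \<forall>x\<ge>0. real (card {p. prime p \<and> x < real p \<and> real p \<le> x + y})
     \<le> 2 * y / ln y + 10 * (y * ln (ln y) / (ln y)\<^sup>2)) at_top"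
proof -
  have "eventually (\<lambda>y::real. 0 \<le> y) at_top"
    by (rule eventually_ge_at_top)
  moreover have "eventually (\<lambda>y. 1 < sqrt y / ln y) at_top"
    by real_asymp
  moreover have "eventually (\<lambda>y. sqrt y / ln y + y / ln (sqrt y / ln y) + (sqrt y / ln y)\<^sup>2
      \<le> 2 * y / ln y + 10 * (y * ln (ln y) / (ln y)\<^sup>2)) at_top"
    by real_asymp
  ultimately show ?thesis
  proof eventually_elim
    case (elim y)
    have "real (card {p. prime p \<and> x < real p \<and> real p \<le> x + y})
        \<le> 2 * y / ln y + 10 * (y * ln (ln y) / (ln y)\<^sup>2)" if "0 \<le> x" for x
      using that elim card_primes_in_interval_le[of x y "sqrt y / ln y"] by linarith
    then show ?case by blast
  qed
qed

lemma ln_ln_pos: "3 \<le> y \<Longrightarrow> 0 < ln (ln (y::real))"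
proof -
  assume "3 \<le> y"
  have "exp 1 < (3::real)"
    using e_less_272 by simp
  with \<open>3 \<le> y\<close> have "exp 1 < y" by simp
  then have "1 < ln y"
    using \<open>3 \<le> y\<close> ln_less_cancel_iff[of "exp 1" y] by simp
  then show ?thesis by simp
qed

lemma card_primes_in_interval_le_bounded_range:
  "\<exists>K. \<forall>x y. 0 \<le> x \<longrightarrow> 3 \<le> y \<longrightarrow> y \<le> Y \<longrightarrow>
     real (card {p. prime p \<and> x < real p \<and> real p \<le> x + y}) \<le> K * (y * ln (ln y) / (ln y)\<^sup>2)"
proof -
  define K where "K = 2 * (ln Y)\<^sup>2 / ln (ln (3::real))"
  have "real (card {p. prime p \<and> x < real p \<and> real p \<le> x + y}) \<le> K * (y * ln (ln y) / (ln y)\<^sup>2)"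
    if x: "0 \<le> x" and y: "3 \<le> y" "y \<le> Y" for x y
  proof -
    have "0 < ln (ln (3::real))" "ln (ln 3) \<le> ln (ln y)" "1 < ln y" "ln y \<le> ln Y"
      using y ln_ln_pos[of 3] ln_ln_pos[of y] by auto
    then have "2 * y = K * (y * ln (ln 3) / (ln Y)\<^sup>2)"
      by (simp add: K_def field_simps)
    also have "\<dots> \<le> K * (y * ln (ln y) / (ln y)\<^sup>2)"
      using \<open>0 < ln (ln 3)\<close> \<open>ln (ln 3) \<le> ln (ln y)\<close> \<open>1 < ln y\<close> \<open>ln y \<le> ln Y\<close> y
      by (intro mult_left_mono frac_le mult_nonneg_nonneg power_mono) (auto simp: K_def)
    finally show ?thesis
      using card_primes_in_interval_le_trivial[of x y] x y by simp
  qed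
  then show ?thesis by blast
qed

lemma card_primes_in_interval_Brun_Titchmarsh:
  "\<exists>C. \<forall>x y. 0 \<le> x \<longrightarrow> 3 \<le> y \<longrightarrow>
     real (card {p. prime p \<and> x < real p \<and> real p \<le> x + y})
       \<le> 2 * y / ln y + C * (y * ln (ln y) / (ln y)\<^sup>2)"
proof -
  obtain Y where large: "\<forall>y\<ge>Y. \<forall>x\<ge>0. real (card {p. prime p \<and> x < real p \<and> real p \<le> x + y})
      \<le> 2 * y / ln y + 10 * (y * ln (ln y) / (ln y)\<^sup>2)"
    using eventually_card_primes_in_interval_le unfolding eventually_at_top_linorder by blast
  obtain K where small: "\<forall>x y. 0 \<le> x \<longrightarrow> 3 \<le> y \<longrightarrow> y \<le> Y \<longrightarrow>
      real (card {p. prime p \<and> x < real p \<and> real p \<le> x + y}) \<le> K * (y * ln (ln y) / (ln y)\<^sup>2)"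
    using card_primes_in_interval_le_bounded_range by blast
  show ?thesis
  proof (intro exI[of _ "max 10 K"] allI impI)
    fix x y :: real assume "0 \<le> x" "3 \<le> y"
    define E where "E = y * ln (ln y) / (ln y)\<^sup>2"
    have "0 \<le> E"
      using ln_ln_pos[of y] \<open>3 \<le> y\<close> by (simp add: E_def)
    then have "10 * E \<le> max 10 K * E" "K * E \<le> max 10 K * E"
      by (simp_all add: mult_right_mono)
    have "0 \<le> 2 * y / ln y"
      using \<open>3 \<le> y\<close> by simp
    show "real (card {p. prime p \<and> x < real p \<and> real p \<le> x + y}) \<le> 2 * y / ln y + max 10 K * E"
    proof (cases "Y \<le> y")
      case True
      then have "real (card {p. prime p \<and> x < real p \<and> real p \<le> x + y}) \<le> 2 * y / ln y + 10 * E"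
        using large \<open>0 \<le> x\<close> unfolding E_def by blast
      with \<open>10 * E \<le> max 10 K * E\<close> show ?thesis by linarith
    next
      case False
      then have "real (card {p. prime p \<and> x < real p \<and> real p \<le> x + y}) \<le> K * E"
        using small \<open>0 \<le> x\<close> \<open>3 \<le> y\<close> unfolding E_def by auto
      with \<open>K * E \<le> max 10 K * E\<close> \<open>0 \<le> 2 * y / ln y\<close> show ?thesis by linarith
    qed
  qed
qed

theorem mainTheorem9:
  shows "\<exists>C :: real. \<forall>x y :: real. x \<ge> 2 \<longrightarrow> y \<ge> 3 \<longrightarrow>
    real (primepi (x + y)) - real (primepi x)
      \<le> 2 * y / ln y + C * y * ln (ln y) / (ln y)\<^sup>2"
proof -
  obtain C where "\<forall>x y. 0 \<le> x \<longrightarrow> 3 \<le> y \<longrightarrow>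
      real (card {p. prime p \<and> x < real p \<and> real p \<le> x + y})
        \<le> 2 * y / ln y + C * (y * ln (ln y) / (ln y)\<^sup>2)"
    using card_primes_in_interval_Brun_Titchmarsh by blast
  then show ?thesis
    using primepi_diff_eq_card by (intro exI[of _ C]) (simp add: mult.assoc)
qed

end
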